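(* Let $a$ be a regular scale factor, let $\dot a(0^+)=\lim_{t\to0^+}\dot a(t)$, and fix $\tau>0$. (a) If $\dot a(0^+)=0$ and there exists $\epsilon>0$ such that $\ddot a(t)\ge0$ for $t\in(0,\epsilon)$, then \[ \lim_{t_0\to0^+}\int_{t_0}^{\tau}\frac{\ddot a(t)}{\dot a(t)^2}\frac{dt}{\sqrt{a^2(\tau)-a^2(t)}}=\infty. \] (b) If $\infty>\dot a(0^+)>0$, then the limit \[ \lim_{t_0\to0^+}\int_{t_0}^{\tau}\frac{\ddot a(t)}{\dot a(t)^2}\frac{dt}{\sqrt{a^2(\tau)-a^2(t)}}=\int_{0}^{\tau}\frac{\ddot a(t)}{\dot a(t)^2}\frac{dt}{\sqrt{a^2(\tau)-a^2(t)}} \] exists and is finite.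
   Context: A function $a:[0,\infty)\to[0,\infty)$ is a regular scale factor if: (a) $a(0)=0$; (b) $a$ is increasing and continuous on $[0,\infty)$, twice continuously differentiable on $(0,\infty)$, with an inverse function on $[0,\infty)$; (c) $\frac{a(t)\ddot a(t)}{\dot a(t)^2}\le1$ for all $t>0$ (presupposing $\dot a(t)\ne0$). *)

theory Defs
  imports "HOL-Analysis.Analysis"
begin

definition regular_scale_factor ::
  "(real \<Rightarrow> real) \<Rightarrow> (real \<Rightarrow> real) \<Rightarrow> (real \<Rightarrow> real) \<Rightarrow> bool" where
  "regular_scale_factor a a' a'' \<longleftrightarrow>
     a 0 = 0 \<and>
     (\<forall>t\<ge>0. a t \<ge> 0) \<and>
     strict_mono_on {0..} a \<and>
     continuous_on {0..} a \<and>
     (\<forall>t>0. (a has_real_derivative a' t) (at t)) \<and>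
     (\<forall>t>0. (a' has_real_derivative a'' t) (at t)) \<and>
     continuous_on {0<..} a'' \<and>
     (\<forall>t>0. a' t \<noteq> 0) \<and>
     (\<forall>t>0. a t * a'' t / (a' t)\<^sup>2 \<le> 1)"

definition sf_integrand ::
  "(real \<Rightarrow> real) \<Rightarrow> (real \<Rightarrow> real) \<Rightarrow> (real \<Rightarrow> real) \<Rightarrow> real \<Rightarrow> real \<Rightarrow> real" where
  "sf_integrand a a' a'' \<tau> t = a'' t / (a' t)\<^sup>2 / sqrt ((a \<tau>)\<^sup>2 - (a t)\<^sup>2)"

end

theory Submission
  imports Defs
begin

(* Near t = tau the integrand has an inverse-square-root singularity: by the mean value theorem
   a(tau)^2 - a(t)^2 >= m a(tau) (tau - t) with m the minimum of a' > 0 on [t0, tau], so the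
   integrand is absolutely integrable on every [t0, tau].
   Near 0, a''/a'^2 is the derivative of -1/a'. (a) If a'(0+) = 0 and a'' >= 0, bounding
   1/sqrt(a(tau)^2 - a(t)^2) below by 1/a(tau) gives a lower bound (1/a'(t0) - C)/a(tau) for
   the integral over [t0, tau], which tends to infinity. (b) If a'(0+) = L > 0, integration by
   parts writes the integrand as the derivative of -1/(a' sqrt(a(tau)^2 - a^2)), which extends
   continuously to 0, plus the continuous function a/(a(tau)^2 - a^2)^(3/2); hence the integrand
   is integrable on [0, tau]. *)

lemma has_integral_inverse_sqrt_endpoint:
  fixes s b :: real
  assumes "s \<le> b"
  shows "((\<lambda>t. 1 / sqrt (b - t)) has_integral 2 * sqrt (b - s)) {s..b}"
proof -
  have "((\<lambda>t. 1 / sqrt (b - t)) has_integral (- 2 * sqrt (b - b)) - (- 2 * sqrt (b - s))) {s..b}"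
  proof (rule fundamental_theorem_of_calculus_interior_strong[where S = "{}"])
    fix x assume "x \<in> {s<..<b} - {}"
    then show "((\<lambda>t. - 2 * sqrt (b - t)) has_vector_derivative 1 / sqrt (b - x)) (at x)"
      unfolding has_real_derivative_iff_has_vector_derivative[symmetric]
      by (auto intro!: derivative_eq_intros simp: field_simps)
  qed (use assms in \<open>auto intro!: continuous_intros\<close>)
  then show ?thesis by simp
qed

lemma absolutely_integrable_on_Icc_inverse_sqrt_bound:
  fixes f :: "real \<Rightarrow> real"
  assumes cont: "continuous_on {s..<b} f" and "s \<le> b"
    and bound: "\<And>t. s \<le> t \<Longrightarrow> t < b \<Longrightarrow> \<bar>f t\<bar> \<le> M / sqrt (b - t)"
  shows "f absolutely_integrable_on {s..b}"
proof -
  have neg: "negligible {t \<in> A - B. g t \<noteq> 0}" if "A - B \<subseteq> {b}" for A B and g :: "real \<Rightarrow> real"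
    using that by (metis (no_types, lifting) mem_Collect_eq negligible_sing negligible_subset subset_eq)
  have "((\<lambda>t. M / sqrt (b - t)) has_integral M * (2 * sqrt (b - s))) {s..b}"
    using has_integral_mult_right[OF has_integral_inverse_sqrt_endpoint[OF \<open>s \<le> b\<close>]] by simp
  then have bound_int: "(\<lambda>t. M / sqrt (b - t)) integrable_on {s..<b}"
    by (rule integrable_spike_set[OF has_integral_integrable neg neg]) auto
  have "f absolutely_integrable_on {s..<b}"
    by (rule measurable_bounded_by_integrable_imp_absolutely_integrable[OF
          continuous_imp_measurable_on_sets_lebesgue[OF cont] _ bound_int]) (use bound in auto)
  moreover have "negligible {t \<in> {s..<b} - {s..b}. f t \<noteq> 0}"
    "negligible {t \<in> {s..b} - {s..<b}. f t \<noteq> 0}"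
    by (rule neg; auto)+
  ultimately show ?thesis
    using absolutely_integrable_spike_set_eq by blast
qed

lemma tendsto_integral_at_right_start:
  fixes f :: "real \<Rightarrow> 'a::banach"
  assumes "f integrable_on {s..b}" "s < b"
  shows "((\<lambda>x. integral {x..b} f) \<longlongrightarrow> integral {s..b} f) (at_right s)"
  using continuous_on_Icc_at_rightD[OF indefinite_integral_continuous_1'[OF assms(1)] assms(2)] .

lemma continuous_on_Icc_extend_at_left:
  fixes f :: "real \<Rightarrow> 'a::topological_space"
  assumes cont: "continuous_on {s<..b} f" and lim: "(f \<longlongrightarrow> L) (at_right s)" and "s < b"
  shows "continuous_on {s..b} (\<lambda>t. if t = s then L else f t)"
  unfolding continuous_on_eq_continuous_within
proof
  define g where "g t = (if t = s then L else f t)" for t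
  fix x assume x: "x \<in> {s..b}"
  show "continuous (at x within {s..b}) g"
  proof (cases "x = s")
    case True
    have "(g \<longlongrightarrow> L) (at_right s)"
      using lim by (rule tendsto_cong[THEN iffD1, rotated]) (simp add: eventually_at_filter g_def)
    then show ?thesis
      using True \<open>s < b\<close> by (simp add: continuous_within at_within_Icc_at_right g_def)
  next
    case False
    have "at x within {s..b} = at x within {s<..b}"
      by (rule at_within_nhd[of _ "{s<..}"]) (use x False in auto)
    moreover have "(f \<longlongrightarrow> f x) (at x within {s<..b})"
      using cont x False by (simp add: continuous_on_def)
    moreover have "\<forall>\<^sub>F t in at x within {s<..b}. f t = g t"
      by (auto simp: eventually_at_filter g_def)
    moreover have "g x = f x"
      using False by (simp add: g_def)
    ultimately show ?thesis
      by (simp add: continuous_within tendsto_cong)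
  qed
qed

locale regular_scale =
  fixes a a' a'' :: "real \<Rightarrow> real"
  assumes regular: "regular_scale_factor a a' a''"
begin

abbreviation integrand :: "real \<Rightarrow> real \<Rightarrow> real" where
  "integrand \<equiv> sf_integrand a a' a''"

lemma a_nonneg: "0 \<le> t \<Longrightarrow> 0 \<le> a t"
  using regular by (simp add: regular_scale_factor_def)

lemma a_less: "0 \<le> s \<Longrightarrow> s < t \<Longrightarrow> a s < a t"
  using regular by (auto simp: regular_scale_factor_def intro: strict_mono_onD)

lemma a_has_derivative: "0 < t \<Longrightarrow> (a has_real_derivative a' t) (at t)"
  using regular by (simp add: regular_scale_factor_def)

lemma a'_has_derivative: "0 < t \<Longrightarrow> (a' has_real_derivative a'' t) (at t)"
  using regular by (simp add: regular_scale_factor_def)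

lemma continuous_on_a: "continuous_on {0..} a"
  using regular by (simp add: regular_scale_factor_def)

lemma continuous_on_a': "continuous_on {0<..} a'"
  using a'_has_derivative by (intro continuous_at_imp_continuous_on) (auto intro: DERIV_isCont)

lemma continuous_on_a'': "continuous_on {0<..} a''"
  using regular by (simp add: regular_scale_factor_def)

lemma a'_pos:
  assumes "0 < t"
  shows "0 < a' t"
proof (rule ccontr)
  assume "\<not> 0 < a' t"
  with regular assms have "a' t < 0"
    by (auto simp: regular_scale_factor_def less_le)
  from DERIV_neg_dec_right[OF a_has_derivative[OF assms] this]
  obtain d where "0 < d" "a (t + d / 2) < a t"
    by (metis field_sum_of_halves half_gt_zero less_add_same_cancel1)
  with a_less[of t "t + d / 2"] assms show False by auto
qed

lemma gap_pos: "0 \<le> t \<Longrightarrow> t < \<tau> \<Longrightarrow> 0 < (a \<tau>)\<^sup>2 - (a t)\<^sup>2"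
  using a_less[of t \<tau>] a_nonneg[of t] by (simp add: power_strict_mono)

lemma continuous_on_integrand: "continuous_on {0<..<\<tau>} (integrand \<tau>)"
proof -
  have "continuous_on {0<..<\<tau>} a''" "continuous_on {0<..<\<tau>} a'" "continuous_on {0<..<\<tau>} a"
    by (auto intro: continuous_on_subset[OF continuous_on_a''] continuous_on_subset[OF continuous_on_a']
        continuous_on_subset[OF continuous_on_a])
  moreover have "a' t \<noteq> 0" "sqrt ((a \<tau>)\<^sup>2 - (a t)\<^sup>2) \<noteq> 0" if "t \<in> {0<..<\<tau>}" for t
    using a'_pos[of t] gap_pos[of t \<tau>] that by auto
  ultimately show ?thesis
    unfolding sf_integrand_def by (intro continuous_intros) auto
qed

lemma gap_lower_bound:
  assumes "0 < t" "t < \<tau>" "0 \<le> m" and m: "\<And>x. t \<le> x \<Longrightarrow> x \<le> \<tau> \<Longrightarrow> m \<le> a' x"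
  shows "m * a \<tau> * (\<tau> - t) \<le> (a \<tau>)\<^sup>2 - (a t)\<^sup>2"
proof -
  obtain z where z: "t < z" "z < \<tau>" "a \<tau> - a t = (\<tau> - t) * a' z"
    using MVT2[of t \<tau> a a'] a_has_derivative assms(1,2) by force
  then have "m * (\<tau> - t) \<le> a \<tau> - a t"
    using m[of z] assms(2) by (simp add: mult.commute mult_left_mono)
  moreover have "a \<tau> \<le> a \<tau> + a t" "0 \<le> m * (\<tau> - t)"
    using a_nonneg[of t] assms by auto
  ultimately have "m * (\<tau> - t) * a \<tau> \<le> (a \<tau> - a t) * (a \<tau> + a t)"
    by (intro mult_mono) auto
  then show ?thesis
    by (simp add: power2_eq_square algebra_simps)
qed

lemma integrand_bound_near_end:
  assumes "0 < s" "s < \<tau>"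
  obtains M where "\<And>t. s \<le> t \<Longrightarrow> t < \<tau> \<Longrightarrow> \<bar>integrand \<tau> t\<bar> \<le> M / sqrt (\<tau> - t)"
proof -
  have "continuous_on {s..\<tau>} a''" "continuous_on {s..\<tau>} a'"
    using assms by (auto intro: continuous_on_subset[OF continuous_on_a''] continuous_on_subset[OF continuous_on_a'])
  moreover have "a' t \<noteq> 0" if "t \<in> {s..\<tau>}" for t
    using a'_pos[of t] assms that by auto
  ultimately have ratio_cont: "continuous_on {s..\<tau>} (\<lambda>t. a'' t / (a' t)\<^sup>2)"
    by (intro continuous_intros) auto
  obtain B where B: "\<And>t. t \<in> {s..\<tau>} \<Longrightarrow> \<bar>a'' t / (a' t)\<^sup>2\<bar> \<le> B"
    using continuous_on_compact_bound[OF compact_Icc ratio_cont] by (metis real_norm_def)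
  obtain t\<^sub>m where t\<^sub>m: "t\<^sub>m \<in> {s..\<tau>}" "\<And>x. x \<in> {s..\<tau>} \<Longrightarrow> a' t\<^sub>m \<le> a' x"
    using continuous_attains_inf[OF compact_Icc _ \<open>continuous_on {s..\<tau>} a'\<close>] assms by auto
  have "0 \<le> B"
    using B[of s] assms by (smt (verit) atLeastAtMost_iff)
  define K where "K = sqrt (a' t\<^sub>m * a \<tau>)"
  have "0 < K"
    using a'_pos[of t\<^sub>m] a_less[of 0 \<tau>] a_nonneg[of 0] t\<^sub>m(1) assms by (auto simp: K_def)
  show ?thesis
  proof
    fix t assume t: "s \<le> t" "t < \<tau>"
    have "a' t\<^sub>m * a \<tau> * (\<tau> - t) \<le> (a \<tau>)\<^sup>2 - (a t)\<^sup>2"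
      using gap_lower_bound[of t \<tau> "a' t\<^sub>m"] t\<^sub>m a'_pos[of t\<^sub>m] assms t by auto
    then have "K * sqrt (\<tau> - t) \<le> sqrt ((a \<tau>)\<^sup>2 - (a t)\<^sup>2)"
      unfolding K_def by (metis real_sqrt_le_mono real_sqrt_mult)
    moreover have "0 < K * sqrt (\<tau> - t)"
      using \<open>0 < K\<close> t by simp
    ultimately have "\<bar>a'' t / (a' t)\<^sup>2\<bar> / sqrt ((a \<tau>)\<^sup>2 - (a t)\<^sup>2) \<le> B / (K * sqrt (\<tau> - t))"
      using B[of t] \<open>0 \<le> B\<close> t by (intro frac_le) auto
    then show "\<bar>integrand \<tau> t\<bar> \<le> B / K / sqrt (\<tau> - t)"
      using gap_pos[of t \<tau>] assms t by (simp add: sf_integrand_def abs_divide abs_mult)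
  qed
qed

lemma absolutely_integrable_near_end:
  assumes "0 < s" "s < \<tau>"
  shows "integrand \<tau> absolutely_integrable_on {s..\<tau>}"
proof -
  obtain M where "\<And>t. s \<le> t \<Longrightarrow> t < \<tau> \<Longrightarrow> \<bar>integrand \<tau> t\<bar> \<le> M / sqrt (\<tau> - t)"
    using integrand_bound_near_end[OF assms] by blast
  moreover have "continuous_on {s..<\<tau>} (integrand \<tau>)"
    using assms by (intro continuous_on_subset[OF continuous_on_integrand]) auto
  ultimately show ?thesis
    using absolutely_integrable_on_Icc_inverse_sqrt_bound assms by (metis less_imp_le)
qed

lemma neg_inverse_a'_has_derivative:
  assumes "0 < t"
  shows "((\<lambda>x. - inverse (a' x)) has_real_derivative a'' t / (a' t)\<^sup>2) (at t)"
  using DERIV_minus[OF DERIV_inverse_fun[OF a'_has_derivative[OF assms]]] a'_pos[OF assms]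
  by (simp add: divide_inverse power2_eq_square)

lemma has_integral_a''_over_a'_squared:
  assumes "0 < s" "s \<le> t"
  shows "((\<lambda>x. a'' x / (a' x)\<^sup>2) has_integral inverse (a' s) - inverse (a' t)) {s..t}"
  using fundamental_theorem_of_calculus[OF assms(2), of "\<lambda>x. - inverse (a' x)"] assms
    neg_inverse_a'_has_derivative
  by (simp add: has_real_derivative_iff_has_vector_derivative[symmetric] has_field_derivative_at_within)

lemma integrand_lower_bound:
  assumes "0 < t" "t < \<tau>" "0 \<le> a'' t"
  shows "a'' t / (a' t)\<^sup>2 / a \<tau> \<le> integrand \<tau> t"
proof -
  have "sqrt ((a \<tau>)\<^sup>2 - (a t)\<^sup>2) \<le> a \<tau>"
    using a_nonneg[of t] a_nonneg[of \<tau>] assms by (simp add: real_le_lsqrt)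
  moreover have "0 < sqrt ((a \<tau>)\<^sup>2 - (a t)\<^sup>2)"
    using gap_pos[of t \<tau>] assms by simp
  ultimately show ?thesis
    unfolding sf_integrand_def using assms a_less[of 0 \<tau>] a_nonneg[of 0]
    by (intro divide_left_mono mult_pos_pos) auto
qed

lemma filterlim_integral_integrand_at_top:
  assumes "0 < \<tau>" and lim: "(a' \<longlongrightarrow> 0) (at_right 0)"
    and "0 < \<epsilon>" and convex: "\<And>t. 0 < t \<Longrightarrow> t < \<epsilon> \<Longrightarrow> 0 \<le> a'' t"
  shows "filterlim (\<lambda>t\<^sub>0. integral {t\<^sub>0..\<tau>} (integrand \<tau>)) at_top (at_right 0)"
proof -
  define e where "e = min (\<epsilon> / 2) (\<tau> / 2)"
  have e: "0 < e" "e < \<epsilon>" "e < \<tau>"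
    using assms by (auto simp: e_def)
  define C where "C = integral {e..\<tau>} (integrand \<tau>) - inverse (a \<tau>) * inverse (a' e)"
  have "C + inverse (a \<tau>) * inverse (a' t\<^sub>0) \<le> integral {t\<^sub>0..\<tau>} (integrand \<tau>)"
    if t\<^sub>0: "0 < t\<^sub>0" "t\<^sub>0 < e" for t\<^sub>0
  proof -
    have int: "integrand \<tau> integrable_on {t\<^sub>0..\<tau>}"
      using absolutely_integrable_near_end[of t\<^sub>0 \<tau>] t\<^sub>0 e set_lebesgue_integral_eq_integral(1) by auto
    have split: "integral {t\<^sub>0..\<tau>} (integrand \<tau>) = integral {t\<^sub>0..e} (integrand \<tau>) + integral {e..\<tau>} (integrand \<tau>)"
      using Henstock_Kurzweil_Integration.integral_combine[OF _ _ int, of e] t\<^sub>0 e by simp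
    have int_e: "integrand \<tau> integrable_on {t\<^sub>0..e}"
      using t\<^sub>0 e by (intro integrable_continuous_interval continuous_on_subset[OF continuous_on_integrand]) auto
    have lower: "((\<lambda>t. a'' t / (a' t)\<^sup>2 / a \<tau>) has_integral (inverse (a' t\<^sub>0) - inverse (a' e)) / a \<tau>) {t\<^sub>0..e}"
      using has_integral_divide[OF has_integral_a''_over_a'_squared] t\<^sub>0 by simp
    have "(inverse (a' t\<^sub>0) - inverse (a' e)) / a \<tau> \<le> integral {t\<^sub>0..e} (integrand \<tau>)"
      by (rule has_integral_le[OF lower integrable_integral[OF int_e]])
        (use integrand_lower_bound convex t\<^sub>0 e in auto)
    then show ?thesis
      using split by (simp add: C_def divide_inverse algebra_simps)
  qed
  then have "\<forall>\<^sub>F t\<^sub>0 in at_right 0. C + inverse (a \<tau>) * inverse (a' t\<^sub>0) \<le> integral {t\<^sub>0..\<tau>} (integrand \<tau>)"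
    using e(1) by (auto simp: eventually_at_right_field)
  moreover have "filterlim (\<lambda>t\<^sub>0. C + inverse (a \<tau>) * inverse (a' t\<^sub>0)) at_top (at_right 0)"
  proof -
    have "\<forall>\<^sub>F t in at_right 0. 0 < a' t"
      using a'_pos by (auto simp: eventually_at_right_field intro: exI[of _ 1])
    then have "filterlim (\<lambda>t. inverse (a' t)) at_top (at_right 0)"
      by (rule filterlim_inverse_at_top[OF lim])
    moreover have "0 < inverse (a \<tau>)"
      using a_less[of 0 \<tau>] a_nonneg[of 0] assms by simp
    ultimately show ?thesis
      by (intro filterlim_tendsto_add_at_top[OF tendsto_const] filterlim_tendsto_pos_mult_at_top[OF tendsto_const])
  qed
  ultimately show ?thesis
    by (rule filterlim_at_top_mono[rotated])
qed

lemma boundary_term_has_derivative: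
  assumes "0 < t" "t < \<tau>"
  shows "((\<lambda>x. - inverse (a' x) / sqrt ((a \<tau>)\<^sup>2 - (a x)\<^sup>2)) has_real_derivative
           integrand \<tau> t - a t / sqrt ((a \<tau>)\<^sup>2 - (a t)\<^sup>2) ^ 3) (at t)"
proof -
  define D where "D = (a \<tau>)\<^sup>2 - (a t)\<^sup>2"
  have "0 < D" "0 < a' t"
    using gap_pos[of t \<tau>] a'_pos[of t] assms by (auto simp: D_def)
  have "((\<lambda>x. sqrt ((a \<tau>)\<^sup>2 - (a x)\<^sup>2)) has_real_derivative - (a t * a' t) / sqrt D) (at t)"
    using a_has_derivative[OF assms(1)] \<open>0 < D\<close>
    by (auto intro!: derivative_eq_intros simp: D_def field_simps)
  from DERIV_divide[OF neg_inverse_a'_has_derivative[OF assms(1)] this]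
  have "((\<lambda>x. - inverse (a' x) / sqrt ((a \<tau>)\<^sup>2 - (a x)\<^sup>2)) has_real_derivative
      (a'' t / (a' t)\<^sup>2 * sqrt D - - inverse (a' t) * (- (a t * a' t) / sqrt D)) / (sqrt D * sqrt D)) (at t)"
    using \<open>0 < D\<close> by (simp add: D_def)
  moreover have "(a'' t / (a' t)\<^sup>2 * sqrt D - - inverse (a' t) * (- (a t * a' t) / sqrt D)) / (sqrt D * sqrt D)
      = a'' t / (a' t)\<^sup>2 / sqrt D - a t / sqrt D ^ 3"
    using \<open>0 < D\<close> \<open>0 < a' t\<close> by (simp add: field_simps power3_eq_cube)
  ultimately show ?thesis
    by (simp add: sf_integrand_def D_def)
qed

lemma integrable_near_start:
  assumes "0 < L" and lim: "(a' \<longlongrightarrow> L) (at_right 0)" and "0 < c" "c < \<tau>"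
  shows "integrand \<tau> integrable_on {0..c}"
proof -
  define D where "D x = (a \<tau>)\<^sup>2 - (a x)\<^sup>2" for x
  define P where "P x = - inverse (a' x) / sqrt (D x)" for x
  define P\<^sub>0 where "P\<^sub>0 x = (if x = 0 then - inverse L / sqrt (D 0) else P x)" for x
  define q where "q x = a x / sqrt (D x) ^ 3" for x
  have D_pos: "0 < D x" if "0 \<le> x" "x \<le> c" for x
    using gap_pos[of x \<tau>] that assms by (simp add: D_def)
  have P_deriv: "(P has_real_derivative integrand \<tau> x - q x) (at x)" if "0 < x" "x < \<tau>" for x
    using boundary_term_has_derivative[OF that] by (simp add: P_def[abs_def] q_def D_def)
  have P\<^sub>0_cont: "continuous_on {0..c} P\<^sub>0"
    unfolding P\<^sub>0_def
  proof (rule continuous_on_Icc_extend_at_left[OF _ _ \<open>0 < c\<close>])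
    show "continuous_on {0<..c} P"
      using P_deriv assms by (intro continuous_at_imp_continuous_on ballI DERIV_isCont) force
    have "(a \<longlongrightarrow> a 0) (at_right 0)"
      using continuous_on_a by (auto simp: continuous_on_def intro: tendsto_within_subset)
    then show "(P \<longlongrightarrow> - inverse L / sqrt (D 0)) (at_right 0)"
      unfolding P_def D_def using lim \<open>0 < L\<close> D_pos[of 0] \<open>0 < c\<close>
      by (auto intro!: tendsto_intros simp: D_def)
  qed
  have P\<^sub>0_deriv: "(P\<^sub>0 has_vector_derivative integrand \<tau> x - q x) (at x)" if "x \<in> {0<..<c} - {}" for x
  proof -
    have "(P\<^sub>0 has_real_derivative integrand \<tau> x - q x) (at x)"
      by (rule has_field_derivative_transform_within_open[OF P_deriv[of x], of "{0<..}"])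
        (use that assms in \<open>auto simp: P\<^sub>0_def\<close>)
    then show ?thesis
      by (simp add: has_real_derivative_iff_has_vector_derivative)
  qed
  have "((\<lambda>x. integrand \<tau> x - q x) has_integral P\<^sub>0 c - P\<^sub>0 0) {0..c}"
    by (rule fundamental_theorem_of_calculus_interior_strong[OF _ _ P\<^sub>0_deriv P\<^sub>0_cont])
      (use \<open>0 < c\<close> in auto)
  then have diff_int: "(\<lambda>x. integrand \<tau> x - q x) integrable_on {0..c}"
    by blast
  have q_cont: "continuous_on {0..c} q"
  proof -
    have "sqrt ((a \<tau>)\<^sup>2 - (a x)\<^sup>2) ^ 3 \<noteq> 0" if "x \<in> {0..c}" for x
      using D_pos[of x] that by (simp add: D_def)
    then show ?thesis
      unfolding q_def D_def by (intro continuous_intros continuous_on_subset[OF continuous_on_a]) auto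
  qed
  show ?thesis
    using integrable_add[OF diff_int integrable_continuous_interval[OF q_cont]] by simp
qed

lemma integrable_on_Icc:
  assumes "0 < \<tau>" "0 < L" "(a' \<longlongrightarrow> L) (at_right 0)"
  shows "integrand \<tau> integrable_on {0..\<tau>}"
proof (rule Henstock_Kurzweil_Integration.integrable_combine[of 0 "\<tau> / 2"])
  show "integrand \<tau> integrable_on {0..\<tau> / 2}"
    using assms by (intro integrable_near_start) auto
  show "integrand \<tau> integrable_on {\<tau> / 2..\<tau>}"
    using absolutely_integrable_near_end[of "\<tau> / 2" \<tau>] assms set_lebesgue_integral_eq_integral(1) by auto
qed (use assms in auto)

end

theorem lemma5p6:
  fixes a a' a'' :: "real \<Rightarrow> real" and \<tau> :: real
  assumes "regular_scale_factor a a' a''"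
    and "\<tau> > 0"
  shows
    "((a' \<longlongrightarrow> 0) (at_right 0) \<and> (\<exists>\<epsilon>>0. \<forall>t\<in>{0<..<\<epsilon>}. a'' t \<ge> 0)
        \<longrightarrow> (\<forall>t0\<in>{0<..<\<tau>}. sf_integrand a a' a'' \<tau> absolutely_integrable_on {t0..\<tau>})
          \<and> filterlim (\<lambda>t0. integral {t0..\<tau>} (sf_integrand a a' a'' \<tau>)) at_top (at_right 0))
   \<and> ((\<exists>L>0. (a' \<longlongrightarrow> L) (at_right 0))
        \<longrightarrow> sf_integrand a a' a'' \<tau> integrable_on {0..\<tau>}
          \<and> ((\<lambda>t0. integral {t0..\<tau>} (sf_integrand a a' a'' \<tau>))
               \<longlongrightarrow> integral {0..\<tau>} (sf_integrand a a' a'' \<tau>)) (at_right 0))"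
proof -
  interpret regular_scale a a' a''
    using assms(1) by unfold_locales
  have "filterlim (\<lambda>t\<^sub>0. integral {t\<^sub>0..\<tau>} (integrand \<tau>)) at_top (at_right 0)"
    if "(a' \<longlongrightarrow> 0) (at_right 0)" "0 < \<epsilon>" "\<forall>t\<in>{0<..<\<epsilon>}. 0 \<le> a'' t" for \<epsilon>
    using filterlim_integral_integrand_at_top[OF assms(2)] that by auto
  moreover have "integrand \<tau> integrable_on {0..\<tau>}" if "0 < L" "(a' \<longlongrightarrow> L) (at_right 0)" for L
    using integrable_on_Icc[OF assms(2)] that by blast
  moreover have "\<forall>t\<^sub>0\<in>{0<..<\<tau>}. integrand \<tau> absolutely_integrable_on {t\<^sub>0..\<tau>}"
    using absolutely_integrable_near_end by auto
  ultimately show ?thesis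
    using tendsto_integral_at_right_start assms(2) by blast
qed

end
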